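(* Let $n=m_1m_2$ with $m_1,m_2\geq 2$. Let $A\subseteq\mathbb{Z}_n$, $A_1\subseteq\mathbb{Z}_{m_1}$, $A_2\subseteq\mathbb{Z}_{m_2}$ be nonempty subsets none of which contains $0$. Suppose that for $i=1,2$ we have $f_i(A)\subseteq A_i$, where $f_i:\mathbb{Z}_n\to\mathbb{Z}_{m_i}$ is the natural map. Then $D_A(n)\geq D_{A_1}(m_1)+D_{A_2}(m_2)-1$.
   Context: $\mathbb{Z}_m$ is the integers mod $m$. For nonempty $A\subseteq\mathbb{Z}_m\setminus\{0\}$, a sequence $(x_1,\ldots,x_k)$ in $\mathbb{Z}_m$ is an $A$-weighted zero-sum sequence if there exist $a_1,\ldots,a_k\in A$ with $\sum a_ix_i=0$; $D_A(m)$ is the least positive integer $k$ such that every sequence of length $k$ in $\mathbb{Z}_m$ has a nonempty subsequence which is an $A$-weighted zero-sum sequence. The natural map $\mathbb{Z}_n\to\mathbb{Z}_m$ for $m\mid n$ is $a+n\mathbb{Z}\mapsto a+m\mathbb{Z}$. *)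

theory Defs
  imports Main
begin

text \<open>Z_m is modelled as the residues {0..<m} :: nat set, with arithmetic mod m.
 A sequence of length k in Z_m is a list xs of residues (all < m).\<close>

definition weighted_zero_sum :: "nat \<Rightarrow> nat set \<Rightarrow> nat list \<Rightarrow> nat set \<Rightarrow> bool" where
  "weighted_zero_sum m A xs I \<longleftrightarrow>
     (\<exists>a. (\<forall>i\<in>I. a i \<in> A) \<and> (\<Sum>i\<in>I. a i * xs ! i) mod m = 0)"

definition has_weighted_zs_subseq :: "nat \<Rightarrow> nat set \<Rightarrow> nat list \<Rightarrow> bool" where
  "has_weighted_zs_subseq m A xs \<longleftrightarrow>
     (\<exists>I. I \<subseteq> {..<length xs} \<and> I \<noteq> {} \<and> weighted_zero_sum m A xs I)"

definition davenport_A :: "nat \<Rightarrow> nat set \<Rightarrow> nat" where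
  "davenport_A m A = (LEAST k. 0 < k \<and>
     (\<forall>xs. length xs = k \<longrightarrow> set xs \<subseteq> {..<m} \<longrightarrow> has_weighted_zs_subseq m A xs))"

end

theory Submission
  imports Defs
begin

text \<open>Take an A1-weighted zero-sum free sequence S1 in Z_m1 of length D_A1(m1) - 1 and
  an A2-weighted zero-sum free sequence S2 in Z_m2 of length D_A2(m2) - 1, and form the
  sequence m2 S1, S2 in Z_n. Under the natural map to Z_m2 an A-weighted zero-sum
  subsequence of it becomes an A2-weighted zero sum in S2, because the terms m2 S1 vanish
  there; so it lies inside m2 S1, and cancelling m2 turns it into an A1-weighted zero sum
  in S1. Hence this sequence of length D_A1(m1) + D_A2(m2) - 2 is A-weighted zero-sum free.\<close>

lemma weighted_zero_sum_cong:
  assumes "\<And>i. i \<in> I \<Longrightarrow> xs ! i = ys ! i"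
  shows "weighted_zero_sum m A xs I \<longleftrightarrow> weighted_zero_sum m A ys I"
  unfolding weighted_zero_sum_def using assms by (simp cong: sum.cong)

lemma weighted_zero_sum_append_left_iff:
  assumes "I \<subseteq> {..<length xs}"
  shows "weighted_zero_sum m A (xs @ ys) I \<longleftrightarrow> weighted_zero_sum m A xs I"
  using assms by (intro weighted_zero_sum_cong) (auto simp: nth_append)

lemma weighted_zero_sum_reduce:
  assumes "d dvd m" and "(\<lambda>a. a mod d) ` A \<subseteq> B"
    and "weighted_zero_sum m A xs I"
  shows "weighted_zero_sum d B xs I"
proof -
  obtain a where a: "\<forall>i\<in>I. a i \<in> A" and zero: "(\<Sum>i\<in>I. a i * xs ! i) mod m = 0"
    using assms(3) unfolding weighted_zero_sum_def by auto
  have "(\<Sum>i\<in>I. (a i mod d) * xs ! i) mod d = (\<Sum>i\<in>I. (a i mod d) * xs ! i mod d) mod d"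
    by (rule mod_sum_eq[symmetric])
  also have "\<dots> = (\<Sum>i\<in>I. a i * xs ! i mod d) mod d"
    by (simp add: mod_mult_left_eq)
  also have "\<dots> = (\<Sum>i\<in>I. a i * xs ! i) mod d"
    by (rule mod_sum_eq)
  also have "\<dots> = (\<Sum>i\<in>I. a i * xs ! i) mod m mod d"
    using assms(1) by (rule mod_mod_cancel[symmetric])
  also have "\<dots> = 0"
    using zero by simp
  finally show ?thesis
    unfolding weighted_zero_sum_def using a assms(2)
    by (intro exI[of _ "\<lambda>i. a i mod d"]) auto
qed

lemma weighted_zero_sum_scale:
  assumes "0 < c" and "weighted_zero_sum (c * m) A (map ((*) c) xs) I"
    and "I \<subseteq> {..<length xs}"
  shows "weighted_zero_sum m A xs I"
proof -
  obtain a where a: "\<forall>i\<in>I. a i \<in> A"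
    and zero: "(\<Sum>i\<in>I. a i * map ((*) c) xs ! i) mod (c * m) = 0"
    using assms(2) unfolding weighted_zero_sum_def by auto
  have "(\<Sum>i\<in>I. a i * map ((*) c) xs ! i) = c * (\<Sum>i\<in>I. a i * xs ! i)"
    unfolding sum_distrib_left using assms(3) by (intro sum.cong) auto
  then have "c * m dvd c * (\<Sum>i\<in>I. a i * xs ! i)"
    using zero by (metis mod_0_imp_dvd)
  then have "(\<Sum>i\<in>I. a i * xs ! i) mod m = 0"
    using assms(1) by simp
  then show ?thesis
    unfolding weighted_zero_sum_def using a by auto
qed

lemma weighted_zero_sum_append_right:
  assumes "\<forall>x\<in>set xs. m dvd x" and "finite I"
    and "weighted_zero_sum m A (xs @ ys) I"
  shows "weighted_zero_sum m A ys {j. j + length xs \<in> I}"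
proof -
  define l where "l = length xs"
  define J where "J = {j. j + l \<in> I}"
  obtain a where a: "\<forall>i\<in>I. a i \<in> A" and zero: "(\<Sum>i\<in>I. a i * (xs @ ys) ! i) mod m = 0"
    using assms(3) unfolding weighted_zero_sum_def by auto
  have right: "I - {..<l} = (\<lambda>j. j + l) ` J"
    unfolding J_def by (auto simp: image_iff) (metis le_add_diff_inverse2 not_less)
  have left: "m dvd (\<Sum>i\<in>I \<inter> {..<l}. a i * (xs @ ys) ! i)"
    using assms(1) unfolding l_def by (intro dvd_sum) (auto simp: nth_append)
  have split: "(\<Sum>i\<in>I. a i * (xs @ ys) ! i)
      = (\<Sum>i\<in>I \<inter> {..<l}. a i * (xs @ ys) ! i) + (\<Sum>i\<in>I - {..<l}. a i * (xs @ ys) ! i)"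
    using assms(2) by (rule sum.Int_Diff)
  have shift: "(\<Sum>i\<in>I - {..<l}. a i * (xs @ ys) ! i) = (\<Sum>j\<in>J. a (j + l) * ys ! j)"
    unfolding right by (subst sum.reindex) (auto simp: l_def nth_append)
  have "m dvd (\<Sum>i\<in>I. a i * (xs @ ys) ! i)"
    using zero by (rule mod_0_imp_dvd)
  then have "m dvd (\<Sum>j\<in>J. a (j + l) * ys ! j)"
    using left unfolding split shift by (simp add: dvd_add_right_iff)
  then show ?thesis
    unfolding weighted_zero_sum_def J_def l_def using a
    by (intro exI[of _ "\<lambda>j. a (j + length xs)"]) auto
qed

lemma has_weighted_zs_subseq_append:
  assumes "has_weighted_zs_subseq m A xs"
  shows "has_weighted_zs_subseq m A (xs @ ys)"
proof -
  obtain I where "I \<subseteq> {..<length xs}" "I \<noteq> {}" "weighted_zero_sum m A xs I"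
    using assms unfolding has_weighted_zs_subseq_def by blast
  then show ?thesis
    unfolding has_weighted_zs_subseq_def
    by (intro exI[of _ I]) (auto simp: weighted_zero_sum_append_left_iff)
qed

lemma has_weighted_zs_subseq_product:
  assumes "0 < m2"
    and "(\<lambda>a. a mod m1) ` A \<subseteq> A1" and "(\<lambda>a. a mod m2) ` A \<subseteq> A2"
    and "has_weighted_zs_subseq (m1 * m2) A (map ((*) m2) S1 @ S2)"
  shows "has_weighted_zs_subseq m1 A1 S1 \<or> has_weighted_zs_subseq m2 A2 S2"
proof -
  let ?T = "map ((*) m2) S1 @ S2"
  obtain I where I: "I \<subseteq> {..<length ?T}" "I \<noteq> {}"
    and zs: "weighted_zero_sum (m1 * m2) A ?T I"
    using assms(4) unfolding has_weighted_zs_subseq_def by blast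
  define J where "J = {j. j + length S1 \<in> I}"
  have "weighted_zero_sum m2 A2 ?T I"
    using weighted_zero_sum_reduce[OF _ assms(3) zs] by simp
  moreover have "finite I"
    using I(1) by (rule finite_subset) simp
  ultimately have zs2: "weighted_zero_sum m2 A2 S2 J"
    unfolding J_def using weighted_zero_sum_append_right[of "map ((*) m2) S1" m2 I A2 S2]
    by simp
  show ?thesis
  proof (cases "J = {}")
    case False
    moreover have "J \<subseteq> {..<length S2}"
      using I(1) unfolding J_def by auto
    ultimately show ?thesis
      using zs2 unfolding has_weighted_zs_subseq_def by blast
  next
    case True
    have left: "I \<subseteq> {..<length S1}"
    proof
      fix i
      assume "i \<in> I"
      then have "i - length S1 \<notin> J"
        using True by simp
      then show "i \<in> {..<length S1}"
        using \<open>i \<in> I\<close> unfolding J_def by (cases "length S1 \<le> i") auto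
    qed
    then have "weighted_zero_sum (m2 * m1) A (map ((*) m2) S1) I"
      using zs weighted_zero_sum_append_left_iff[of I "map ((*) m2) S1"]
      by (simp add: mult.commute)
    then have "weighted_zero_sum m1 A S1 I"
      by (rule weighted_zero_sum_scale[OF assms(1) _ left])
    then have "weighted_zero_sum m1 A1 S1 I"
      by (rule weighted_zero_sum_reduce[OF dvd_refl assms(2)])
    then show ?thesis
      using left I(2) unfolding has_weighted_zs_subseq_def by blast
  qed
qed

text \<open>Pigeonhole on the prefix sums: two of the m + 1 prefix sums agree mod m,
  and the block between them has weights all equal to one element of B.\<close>
lemma has_weighted_zs_subseq_length:
  assumes "0 < m" and "B \<noteq> {}" and "length xs = m"
  shows "has_weighted_zs_subseq m B xs"
proof -
  obtain b where b: "b \<in> B" using assms(2) by auto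
  define prefix where "prefix = (\<lambda>j. (\<Sum>i<j. xs ! i) mod m)"
  have "prefix ` {0..m} \<subseteq> {..<m}"
    using assms(1) unfolding prefix_def by auto
  then have "card (prefix ` {0..m}) \<le> card {..<m}"
    by (intro card_mono) auto
  then have "\<not> inj_on prefix {0..m}"
    using card_image by fastforce
  then obtain j1 j2 where j: "j1 < j2" "j2 \<le> m" "prefix j1 = prefix j2"
    unfolding inj_on_def by (metis atLeastAtMost_iff linorder_neqE_nat)
  have "(\<Sum>i<j2. xs ! i) = (\<Sum>i<j1. xs ! i) + (\<Sum>i\<in>{j1..<j2}. xs ! i)"
    using j(1) by (metis less_imp_le sum.atLeastLessThan_concat lessThan_atLeast0 zero_le)
  then have "m dvd (\<Sum>i\<in>{j1..<j2}. xs ! i)"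
    using j(3) mod_eq_dvd_iff_nat[of "\<Sum>i<j1. xs ! i" "\<Sum>i<j2. xs ! i" m]
    unfolding prefix_def by simp
  then have "weighted_zero_sum m B xs {j1..<j2}"
    unfolding weighted_zero_sum_def using b
    by (intro exI[of _ "\<lambda>_. b"]) (simp add: sum_distrib_left[symmetric])
  then show ?thesis
    unfolding has_weighted_zs_subseq_def using j(1,2) assms(3)
    by (intro exI[of _ "{j1..<j2}"]) auto
qed

lemma has_weighted_zs_subseq_davenport_A:
  assumes "0 < m" and "B \<noteq> {}"
    and "length xs = davenport_A m B" and "set xs \<subseteq> {..<m}"
  shows "has_weighted_zs_subseq m B xs"
proof -
  have "0 < m \<and> (\<forall>xs. length xs = m \<longrightarrow> set xs \<subseteq> {..<m} \<longrightarrow> has_weighted_zs_subseq m B xs)"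
    using assms(1,2) has_weighted_zs_subseq_length by blast
  then have "0 < davenport_A m B \<and> (\<forall>xs. length xs = davenport_A m B \<longrightarrow>
      set xs \<subseteq> {..<m} \<longrightarrow> has_weighted_zs_subseq m B xs)"
    unfolding davenport_A_def by (rule LeastI)
  then show ?thesis
    using assms(3,4) by blast
qed

lemma length_less_davenport_A:
  assumes "0 < m" and "B \<noteq> {}"
    and "set xs \<subseteq> {..<m}" and "\<not> has_weighted_zs_subseq m B xs"
  shows "length xs < davenport_A m B"
proof (rule ccontr)
  assume "\<not> length xs < davenport_A m B"
  then have "has_weighted_zs_subseq m B (take (davenport_A m B) xs)"
    using assms(3) set_take_subset
    by (intro has_weighted_zs_subseq_davenport_A[OF assms(1,2)]) force+
  then have "has_weighted_zs_subseq m B xs"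
    using has_weighted_zs_subseq_append by (metis append_take_drop_id)
  with assms(4) show False ..
qed

lemma obtain_zs_free_seq:
  obtains xs where "length xs = davenport_A m B - 1" and "set xs \<subseteq> {..<m}"
    and "\<not> has_weighted_zs_subseq m B xs"
proof (cases "davenport_A m B \<le> 1")
  case True
  then show ?thesis
    using that[of "[]"] by (simp add: has_weighted_zs_subseq_def)
next
  case False
  then have "davenport_A m B - 1 < davenport_A m B"
    by simp
  then have "\<not> (0 < davenport_A m B - 1 \<and> (\<forall>xs. length xs = davenport_A m B - 1 \<longrightarrow>
      set xs \<subseteq> {..<m} \<longrightarrow> has_weighted_zs_subseq m B xs))"
    unfolding davenport_A_def by (rule not_less_Least)
  then show ?thesis
    using False that by auto
qed

theorem lemma1p7:
  fixes n m1 m2 :: nat and A A1 A2 :: "nat set"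
  assumes "n = m1 * m2" and "m1 \<ge> 2" and "m2 \<ge> 2"
    and "A \<subseteq> {1..<n}" and "A \<noteq> {}"
    and "A1 \<subseteq> {1..<m1}" and "A1 \<noteq> {}"
    and "A2 \<subseteq> {1..<m2}" and "A2 \<noteq> {}"
    and "(\<lambda>a. a mod m1) ` A \<subseteq> A1"
    and "(\<lambda>a. a mod m2) ` A \<subseteq> A2"
  shows "davenport_A n A \<ge> davenport_A m1 A1 + davenport_A m2 A2 - 1"
proof -
  obtain S1 where S1: "length S1 = davenport_A m1 A1 - 1" "set S1 \<subseteq> {..<m1}"
    "\<not> has_weighted_zs_subseq m1 A1 S1" by (rule obtain_zs_free_seq)
  obtain S2 where S2: "length S2 = davenport_A m2 A2 - 1" "set S2 \<subseteq> {..<m2}"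
    "\<not> has_weighted_zs_subseq m2 A2 S2" by (rule obtain_zs_free_seq)
  let ?T = "map ((*) m2) S1 @ S2"
  have "m2 * x < n" if "x \<in> set S1" for x
    using that S1(2) assms(1,3) mult_less_mono2[of x m1 m2] by (auto simp: mult.commute)
  moreover have "y < n" if "y \<in> set S2" for y
    using that S2(2) assms(1,2) by (auto intro: less_le_trans[of _ m2])
  ultimately have "set ?T \<subseteq> {..<n}"
    by auto
  moreover have "\<not> has_weighted_zs_subseq n A ?T"
    using has_weighted_zs_subseq_product[OF _ assms(10,11)] S1(3) S2(3) assms(1,3)
    by fastforce
  moreover have "0 < n"
    using assms(1-3) by simp
  ultimately have "length ?T < davenport_A n A"
    using assms(5) length_less_davenport_A by blast
  then show ?thesis
    using S1(1) S2(1) by simp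
qed

end
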